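(* In the setting of the Weighted Graph Sampler below, let $G\in\mathcal{G}$, let $w$ be a vertex sequence returned by the kernel selection procedure from $G$, $z=\{w,w^r\}$, and let $[\Delta_{low},\Delta_{up}]$ be the admissible range of $\Delta$. If $\Delta_{up}-\Delta_{low}\ge 2$, then the probability $\mathbb{V}_{G_{\Delta^*}}(z)$ that kernel selection from $G_{\Delta^*}$ returns $w$ or $w^r$ is the same for all integers $\Delta^*$ with $\Delta_{low}<\Delta^*<\Delta_{up}$. Consequently the conditional law of $\Delta$ is $$\frac{1}{d}\Big(\mathbb{V}_{G_{\Delta_{low}}}(z)\delta_{\Delta_{low}}+\mathbb{V}_{G_{\Delta_{up}}}(z)\delta_{\Delta_{up}}+\alpha_{int}\sum_{\Delta_{low}<\tilde\Delta<\Delta_{up}}\delta_{\tilde\Delta}\Big),$$ where $\alpha_{int}$ is this common value and $d=\mathbb{V}_{G_{\Delta_{low}}}(z)+\mathbb{V}_{G_{\Delta_{up}}}(z)+\alpha_{int}\max(\Delta_{up}-\Delta_{low}-1,0)$.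
   Context: Setting (weighted graphs). $V$ finite; an integer-weighted graph is $G=(V,E,c)$ with $c:V\times V\to\mathbb{N}_0$, $E(G)=\{uv:c(uv)>0\}$; graphs all directed or all undirected. $G_0$ given, $\mathcal{F}$ a given set of possible edges; $\mathcal{G}$ is the set of weighted graphs with the same (in- and out-, if directed) strength sequence as $G_0$ and $c_G(uv)=c_{G_0}(uv)$ for $uv\in\mathcal{F}$. $N_G(u)=\{v: vu\in E(G), vu\notin\mathcal{F}\}$, $M_G(u)=\{v: uv\notin\mathcal{F}\}$. Kernel selection from $G$: $W_{-1}=*$; $W_0\sim$ Uniform$\{v:N_G(v)\neq\emptyset\}$; $n=0$; repeat: (1) if $N_G(W_n)\setminus\{W_{n-1}\}=\emptyset$ return "identity", else $W_{n+1}\sim$ Uniform of that set; (2) if $W_0\in M_G(W_{n+1})\setminus\{W_n\}$ return $W_0W_1\cdots W_{n+1}W_0$; else if $M_G(W_{n+1})\setminus\{W_n\}=\emptyset$ return "identity"; else $W_{n+2}\sim$ Uniform of that set, $n\leftarrow n+2$. For $w=w_0\cdots w_kw_0$, $n_w(uv)$ is the number of occurrences of $uv$ among $w_1w_0,w_3w_2,\dots,w_kw_{k-1}$ minus the number among $w_1w_2,\dots,w_kw_0$. $G_\Delta$ is the graph with weights $c_G(uv)+n_w(uv)\Delta$; the admissible range $[\Delta_{low},\Delta_{up}]$ is the set of integers $\Delta$ with $G_\Delta\in\mathcal{G}$. $\mathbb{V}_{G'}(z)$ is the probability that kernel selection from $G'$ returns $w$ or $w^r$. The Weighted Graph Sampler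 samples $\Delta$ in the admissible range with probability proportional to $\mathbb{V}_{G_\Delta}(z)$. *)

theory Defs
  imports Complex_Main
begin

text \<open>Vertex set V = UNIV of a finite type. A weighted graph is a weight function
  c :: 'v => 'v => int (nonnegativity is part of membership in the class GG).
  The flag dir says whether all graphs are directed (True) or undirected (False).
  F is the set of fixed (possible) edges, given as ordered pairs; in the undirected
  case an ordered pair stands for the unordered edge.\<close>

definition inF :: "bool \<Rightarrow> ('v \<times> 'v) set \<Rightarrow> 'v \<Rightarrow> 'v \<Rightarrow> bool" where
  "inF dir F u v \<longleftrightarrow> (u, v) \<in> F \<or> (\<not> dir \<and> (v, u) \<in> F)"

definition Nbr :: "bool \<Rightarrow> ('v \<times> 'v) set \<Rightarrow> ('v \<Rightarrow> 'v \<Rightarrow> int) \<Rightarrow> 'v \<Rightarrow> 'v set" where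
  "Nbr dir F c u = {v. c v u > 0 \<and> \<not> inF dir F v u}"

definition Mset :: "bool \<Rightarrow> ('v \<times> 'v) set \<Rightarrow> 'v \<Rightarrow> 'v set" where
  "Mset dir F u = {v. \<not> inF dir F u v}"

definition ind :: "bool \<Rightarrow> real" where
  "ind b = (if b then 1 else 0)"

definition unif :: "'v \<Rightarrow> 'v set \<Rightarrow> real" where
  "unif x A = (if x \<in> A then 1 / real (card A) else 0)"

text \<open>Probability that kernel selection from the graph c returns the sequence
  w_0 w_1 ... w_k w_0, where the list w = [w_0, ..., w_k] (closing w_0 omitted).
  It is the product of the probabilities of the uniform choices along the unique
  trajectory producing w, together with the indicators of the (deterministic)
  stopping tests.\<close>
definition kernel_prob :: "bool \<Rightarrow> ('v::finite \<times> 'v) set \<Rightarrow> ('v \<Rightarrow> 'v \<Rightarrow> int) \<Rightarrow> 'v list \<Rightarrow> real" where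
  "kernel_prob dir F c w =
    (if even (length w) \<and> 2 \<le> length w then
      (let k = length w - 1;
           A = (\<lambda>j. Nbr dir F c (w ! (j - 1)) - (if j = 1 then {} else {w ! (j - 2)}));
           B = (\<lambda>j. Mset dir F (w ! j) - {w ! (j - 1)})
       in unif (w ! 0) {v. Nbr dir F c v \<noteq> {}} *
          (\<Prod>j\<in>{1..k}.
             if odd j then unif (w ! j) (A j) *
                  (if j = k then ind (w ! 0 \<in> B j) else ind (w ! 0 \<notin> B j))
             else unif (w ! j) (B (j - 1))))
     else 0)"

text \<open>reversal w^r of the closed sequence w_0 w_1 ... w_k w_0 is w_0 w_k ... w_1 w_0\<close>
definition rev_cyc :: "'v list \<Rightarrow> 'v list" where
  "rev_cyc w = (case w of [] \<Rightarrow> [] | x # xs \<Rightarrow> x # rev xs)"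

definition Vprob :: "bool \<Rightarrow> ('v::finite \<times> 'v) set \<Rightarrow> ('v \<Rightarrow> 'v \<Rightarrow> int) \<Rightarrow> 'v list \<Rightarrow> real" where
  "Vprob dir F c w = kernel_prob dir F c w
     + (if rev_cyc w \<noteq> w then kernel_prob dir F c (rev_cyc w) else 0)"

definition same_edge :: "bool \<Rightarrow> 'v \<times> 'v \<Rightarrow> 'v \<times> 'v \<Rightarrow> bool" where
  "same_edge dir p q \<longleftrightarrow> p = q \<or> (\<not> dir \<and> p = prod.swap q)"

definition nw :: "bool \<Rightarrow> 'v list \<Rightarrow> 'v \<Rightarrow> 'v \<Rightarrow> int" where
  "nw dir w u v = (\<Sum>j\<in>{j. j < length w \<and> odd j}.
      (if same_edge dir (w ! j, w ! (j - 1)) (u, v) then 1 else 0)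
    - (if same_edge dir (w ! j, w ! ((j + 1) mod length w)) (u, v) then 1 else 0))"

definition shift :: "bool \<Rightarrow> ('v \<Rightarrow> 'v \<Rightarrow> int) \<Rightarrow> 'v list \<Rightarrow> int \<Rightarrow> ('v \<Rightarrow> 'v \<Rightarrow> int)" where
  "shift dir c w D = (\<lambda>u v. c u v + nw dir w u v * D)"

definition inGG :: "bool \<Rightarrow> ('v::finite \<times> 'v) set \<Rightarrow> ('v \<Rightarrow> 'v \<Rightarrow> int) \<Rightarrow> ('v \<Rightarrow> 'v \<Rightarrow> int) \<Rightarrow> bool" where
  "inGG dir F c0 c \<longleftrightarrow>
     (\<forall>u v. 0 \<le> c u v)
   \<and> (\<not> dir \<longrightarrow> (\<forall>u v. c u v = c v u))
   \<and> (\<forall>u. (\<Sum>v\<in>UNIV. c u v) = (\<Sum>v\<in>UNIV. c0 u v))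
   \<and> (dir \<longrightarrow> (\<forall>u. (\<Sum>v\<in>UNIV. c v u) = (\<Sum>v\<in>UNIV. c0 v u)))
   \<and> (\<forall>u v. (u, v) \<in> F \<longrightarrow> c u v = c0 u v)"

definition wgs_law :: "bool \<Rightarrow> ('v::finite \<times> 'v) set \<Rightarrow> ('v \<Rightarrow> 'v \<Rightarrow> int) \<Rightarrow> 'v list \<Rightarrow> int \<Rightarrow> int \<Rightarrow> int \<Rightarrow> real" where
  "wgs_law dir F c w lo up x =
    (if x \<in> {lo..up}
     then Vprob dir F (shift dir c w x) w / (\<Sum>y\<in>{lo..up}. Vprob dir F (shift dir c w y) w)
     else 0)"

end

theory Submission
  imports Defs
begin

text \<open>Moving \<open>\<Delta>\<close> along the cycle changes only the weights of edges with \<open>n\<^sub>w(uv) \<noteq> 0\<close>.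
  If both \<open>\<Delta> - 1\<close> and \<open>\<Delta> + 1\<close> are admissible, every such weight is strictly positive at
  \<open>\<Delta>\<close>, being the midpoint of two nonnegative values differing by \<open>2 n\<^sub>w(uv) \<noteq> 0\<close>. Hence the
  support of \<open>G\<^sub>\<Delta>\<close>, and with it every set \<open>N\<^sub>G(u)\<close>, is the same for all interior \<open>\<Delta>\<close>.
  Kernel selection only sees these sets, so \<open>V(z)\<close> of \<open>G\<^sub>\<Delta>\<close> is constant on the interior, and the
  law of \<open>\<Delta>\<close> follows by normalising.\<close>

lemma shift_pos_iff:
  assumes "0 \<le> shift dir c w (D - 1) u v" and "0 \<le> shift dir c w (D + 1) u v"
  shows "0 < shift dir c w D u v \<longleftrightarrow> nw dir w u v \<noteq> 0 \<or> 0 < c u v"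
proof (cases "nw dir w u v = 0")
  case True
  then show ?thesis by (simp add: shift_def)
next
  case False
  from assms have "0 \<le> c u v + nw dir w u v * D - nw dir w u v"
    and "0 \<le> c u v + nw dir w u v * D + nw dir w u v"
    by (simp_all add: shift_def algebra_simps)
  with False have "0 < c u v + nw dir w u v * D" by linarith
  with False show ?thesis by (simp add: shift_def)
qed

lemma Nbr_shift_interior:
  assumes "inGG dir F c0 (shift dir c w (D - 1))" and "inGG dir F c0 (shift dir c w (D + 1))"
  shows "Nbr dir F (shift dir c w D) u = {v. (nw dir w v u \<noteq> 0 \<or> 0 < c v u) \<and> \<not> inF dir F v u}"
proof -
  have "0 < shift dir c w D v u \<longleftrightarrow> nw dir w v u \<noteq> 0 \<or> 0 < c v u" for v
    using assms by (intro shift_pos_iff) (simp_all add: inGG_def)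
  then show ?thesis unfolding Nbr_def by blast
qed

lemma kernel_prob_cong_Nbr:
  assumes "Nbr dir F c = Nbr dir F c'"
  shows "kernel_prob dir F c w = kernel_prob dir F c' w"
  unfolding kernel_prob_def using assms by simp

lemma Vprob_cong_Nbr:
  assumes "Nbr dir F c = Nbr dir F c'"
  shows "Vprob dir F c w = Vprob dir F c' w"
  unfolding Vprob_def using kernel_prob_cong_Nbr[OF assms] by simp

lemma Vprob_shift_interior_eq:
  assumes "\<And>D. inGG dir F c0 (shift dir c w D) \<longleftrightarrow> D \<in> {lo..up}"
    and "lo < D" "D < up" and "lo < D'" "D' < up"
  shows "Vprob dir F (shift dir c w D) w' = Vprob dir F (shift dir c w D') w'"
proof (rule Vprob_cong_Nbr)
  have "inGG dir F c0 (shift dir c w E)" if "lo \<le> E" "E \<le> up" for E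
    using assms(1) that by simp
  then have "Nbr dir F (shift dir c w E) u = {v. (nw dir w v u \<noteq> 0 \<or> 0 < c v u) \<and> \<not> inF dir F v u}"
    if "lo < E" "E < up" for E u
    using that by (simp add: Nbr_shift_interior[of dir F c0 c w E])
  then show "Nbr dir F (shift dir c w D) = Nbr dir F (shift dir c w D')"
    using assms(2-5) by auto
qed

lemma sum_interior_const:
  fixes f :: "int \<Rightarrow> real"
  assumes "lo < up" and "\<And>x. lo < x \<Longrightarrow> x < up \<Longrightarrow> f x = \<alpha>"
  shows "(\<Sum>x\<in>{lo..up}. f x) = f lo + f up + \<alpha> * real_of_int (max (up - lo - 1) 0)"
proof -
  have split: "{lo..up} = insert lo (insert up {lo<..<up})" using assms(1) by auto
  have "(\<Sum>x\<in>{lo..up}. f x) = f lo + (f up + (\<Sum>x\<in>{lo<..<up}. f x))"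
    unfolding split using assms(1) by simp
  also have "(\<Sum>x\<in>{lo<..<up}. f x) = (\<Sum>x\<in>{lo<..<up}. \<alpha>)"
    using assms(2) by (intro sum.cong) auto
  also have "\<dots> = \<alpha> * real_of_int (max (up - lo - 1) 0)"
    using assms(1) by simp
  finally show ?thesis by simp
qed

theorem mainTheorem8:
  fixes dir :: bool and F :: "('v::finite \<times> 'v) set"
    and c0 c :: "'v \<Rightarrow> 'v \<Rightarrow> int" and w :: "'v list" and lo up :: int
  assumes "inGG dir F c0 c"
    and "kernel_prob dir F c w > 0"
    and "{D. inGG dir F c0 (shift dir c w D)} = {lo..up}"
    and "up - lo \<ge> 2"
  shows "\<exists>\<alpha>. (\<forall>D. lo < D \<and> D < up \<longrightarrow> Vprob dir F (shift dir c w D) w = \<alpha>)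
           \<and> (\<forall>x. wgs_law dir F c w lo up x =
                (let Vl = Vprob dir F (shift dir c w lo) w;
                     Vu = Vprob dir F (shift dir c w up) w;
                     d = Vl + Vu + \<alpha> * real_of_int (max (up - lo - 1) 0)
                 in (Vl * ind (x = lo) + Vu * ind (x = up) + \<alpha> * ind (lo < x \<and> x < up)) / d))"
proof -
  define V where "V D = Vprob dir F (shift dir c w D) w" for D
  define \<alpha> where "\<alpha> = V (lo + 1)"
  have admissible: "\<And>D. inGG dir F c0 (shift dir c w D) \<longleftrightarrow> D \<in> {lo..up}"
    using assms(3) by blast
  have interior: "V D = \<alpha>" if "lo < D" "D < up" for D
    unfolding V_def \<alpha>_def
    using Vprob_shift_interior_eq[OF admissible, of D "lo + 1" w] that assms(4) by linarith
  have total: "(\<Sum>y\<in>{lo..up}. V y) = V lo + V up + \<alpha> * real_of_int (max (up - lo - 1) 0)"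
    using sum_interior_const[of lo up V \<alpha>] interior assms(4) by simp
  show ?thesis
    unfolding V_def[symmetric]
  proof (intro exI[of _ \<alpha>] conjI allI impI)
    show "V D = \<alpha>" if "lo < D \<and> D < up" for D
      using interior that by blast
    show "wgs_law dir F c w lo up x = (let Vl = V lo; Vu = V up;
            d = Vl + Vu + \<alpha> * real_of_int (max (up - lo - 1) 0)
          in (Vl * ind (x = lo) + Vu * ind (x = up) + \<alpha> * ind (lo < x \<and> x < up)) / d)" for x
      using interior[of x] total assms(4) unfolding wgs_law_def Let_def V_def[symmetric]
      by (auto simp: ind_def)
  qed
qed

end
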